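(* Let $S^2\subset\mathbb{R}^3$ be the unit sphere, let $S^2\times\mathbb{R}$ be the trivial line bundle with the standard inner product, and let $TS^2$ carry the metric induced from $\mathbb{R}^3$. Define sections $f_1\equiv 1$, $f_2\equiv f_3\equiv 0$ of $S^2\times\mathbb{R}$ (a moving Parseval frame for it). Although $(S^2\times\mathbb{R})\oplus TS^2\cong S^2\times\mathbb{R}^3$ admits a moving basis, there is no moving basis $(e_i)_{i=1}^3$ of continuous sections of $(S^2\times\mathbb{R})\oplus TS^2$ such that $P_{S^2\times\mathbb{R}}e_i=f_i$ for $i=1,2,3$, where $P_{S^2\times\mathbb{R}}$ is the fiberwise orthogonal projection onto the first summand.
   Context: A moving basis of a rank $k$ vector bundle is a sequence of $k$ sections that form a basis of each fiber. A sequence of vectors $(x_i)_{i=1}^k$ in a finite-dimensional real inner product space $H$ is a Parseval frame for $H$ if $\sum_{i=1}^k\langle x,x_i\rangle^2=\|x\|^2$ for all $x\in H$; a moving Parseval frame of a bundle is a sequence of sections forming a Parseval frame of each fiber. *)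

theory Defs
  imports "HOL-Analysis.Analysis"
begin

definition S2 :: "(real^3) set" where
  "S2 = sphere 0 1"

text \<open>Fiber of the Whitney sum (S^2 x R) (+) TS^2 at x: pairs (t, v) with t in R and
  v in the tangent plane T_x S^2 = {v. v \<bullet> x = 0}, viewed inside R x R^3.\<close>
definition sum_fiber :: "real^3 \<Rightarrow> (real \<times> (real^3)) set" where
  "sum_fiber x = {(t, v). v \<bullet> x = 0}"

definition sum_section :: "(real^3 \<Rightarrow> real \<times> (real^3)) \<Rightarrow> bool" where
  "sum_section s \<longleftrightarrow> continuous_on S2 s \<and> (\<forall>x\<in>S2. s x \<in> sum_fiber x)"

definition sum_moving_basis :: "(nat \<Rightarrow> real^3 \<Rightarrow> real \<times> (real^3)) \<Rightarrow> bool" where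
  "sum_moving_basis e \<longleftrightarrow>
     (\<forall>i\<in>{1..3}. sum_section (e i)) \<and>
     (\<forall>x\<in>S2. inj_on (\<lambda>i. e i x) {1..3} \<and>
              independent ((\<lambda>i. e i x) ` {1..3}) \<and>
              span ((\<lambda>i. e i x) ` {1..3}) = sum_fiber x)"

definition P_line :: "real \<times> (real^3) \<Rightarrow> real \<times> (real^3)" where
  "P_line p = (fst p, 0)"

definition parseval_frame :: "'a::real_inner set \<Rightarrow> (nat \<Rightarrow> 'a) \<Rightarrow> nat \<Rightarrow> bool" where
  "parseval_frame H xs k \<longleftrightarrow> (\<forall>i\<in>{1..k}. xs i \<in> H) \<and>
     (\<forall>y\<in>H. (\<Sum>i=1..k. (y \<bullet> xs i)^2) = (norm y)^2)"

definition f_line :: "nat \<Rightarrow> real^3 \<Rightarrow> real" where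
  "f_line i x = (if i = 1 then 1 else 0)"

end

theory Submission
  imports Defs
begin

text \<open>
  The frame (1,0,0) is trivially Parseval for the real line, and the Whitney sum
  (S^2 x R) (+) TS^2 is trivial: at x in S^2 the linear map w \<mapsto> (w\<bullet>x, w - (w\<bullet>x) x)
  is an isomorphism from R^3 onto the fiber, so the standard basis of R^3 transports to a
  moving basis.  Conversely, a moving basis e with P e_2 = f_2 = 0 would make the TS^2-part
  of e_2 a continuous, nowhere vanishing tangent vector field on S^2, which the hairy ball
  theorem forbids.

  The bulk of the file proves the hairy ball theorem for S^2 by a clutching argument:
  (1) on the unit circle neither z nor z^2 has a continuous logarithm;
  (2) stereographic projection from the north pole trivialises TS^2 away from that pole;
      comparing it with its mirror image along the equator gives the transition
      function w \<mapsto> -z^2 cnj w;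
  (3) a nonvanishing tangent field, read in these coordinates over each closed hemisphere
      (a disc), has a continuous logarithm there; on the equator the two logarithms combine
      into a continuous logarithm of z^2, contradicting (1).
\<close>

text \<open>The identity of the unit circle has no continuous logarithm: such a logarithm is purely
  imaginary, so it would make the identity null-homotopic and the circle contractible.\<close>
lemma circle_identity_no_continuous_log:
  assumes cont: "continuous_on (sphere (0::complex) 1) g"
    and log: "\<And>z. z \<in> sphere 0 1 \<Longrightarrow> z = exp (g z)"
  shows False
proof -
  let ?C = "sphere (0::complex) 1"
  have "z = exp (\<i> * of_real ((Im \<circ> g) z))" if z: "z \<in> ?C" for z
  proof -
    have "norm (exp (g z)) = 1" using log[OF z] z by simp
    then have "g z = \<i> * of_real (Im (g z))" by (simp add: complex_eq_iff)
    then show ?thesis using log[OF z] by simp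
  qed
  moreover have "continuous_on ?C (Im \<circ> g)"
    by (intro continuous_intros cont)
  ultimately have "\<exists>a. homotopic_with_canon (\<lambda>h. True) ?C ?C id (\<lambda>t. a)"
    unfolding inessential_eq_continuous_logarithm_circle by auto
  then have "contractible ?C"
    unfolding contractible_def by simp
  then show False
    by (simp add: contractible_sphere)
qed

text \<open>Neither has z^2: halving a logarithm of z^2 gives z up to a continuous, hence constant,
  sign, and so a logarithm of z.\<close>
lemma circle_square_no_continuous_log:
  assumes cont: "continuous_on (sphere (0::complex) 1) K"
    and log: "\<And>z. z \<in> sphere 0 1 \<Longrightarrow> z^2 = exp (K z)"
  shows False
proof -
  let ?C = "sphere (0::complex) 1"
  define w where "w z = z * exp (- K z / 2)" for z
  have w_sign: "w z \<in> {1, -1}" if "z \<in> ?C" for z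
  proof -
    have "(w z)^2 = z^2 * exp (- K z)"
      by (simp add: w_def power_mult_distrib exp_add[symmetric] power2_eq_square)
    also have "\<dots> = 1" using log[OF that] by (simp add: exp_minus)
    finally show ?thesis by (simp add: power2_eq_1_iff)
  qed
  have "connected (w ` ?C)"
    unfolding w_def by (intro connected_continuous_image continuous_intros cont connected_sphere) auto
  moreover have "finite (w ` ?C)"
    using w_sign by (meson finite.emptyI finite.insertI finite_subset image_subsetI)
  moreover have one: "1 \<in> ?C" by simp
  ultimately obtain c where c: "w ` ?C = {c}"
    by (metis connected_finite_iff_sing empty_iff image_is_empty)
  have c_sign: "c \<in> {1, -1}"
    using c w_sign[OF one] by (metis image_eqI one singletonD)
  define g where "g z = K z / 2 + (if c = 1 then 0 else \<i> * of_real pi)" for z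
  have "z = exp (g z)" if z: "z \<in> ?C" for z
  proof -
    have "z * exp (- K z / 2) = c" using c z by (auto simp: w_def)
    then have "z = c * exp (K z / 2)"
      by (metis exp_minus_inverse minus_divide_left mult.assoc mult.right_neutral)
    then show ?thesis using c_sign by (auto simp: g_def exp_add)
  qed
  moreover have "continuous_on ?C g"
    unfolding g_def by (intro continuous_intros cont) auto
  ultimately show False
    using circle_identity_no_continuous_log by blast
qed

text \<open>For v tangent at x, this is (1 - x_3)^2 times
  the image of v under the differential of stereographic projection from the north pole,
  read as a complex number; it trivialises TS^2 away from the north pole.\<close>
definition stereo_coord :: "real^3 \<Rightarrow> real^3 \<Rightarrow> complex" where
  "stereo_coord x v = Complex ((1 - x$3) * v$1 + v$3 * x$1) ((1 - x$3) * v$2 + v$3 * x$2)"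

lemma inner_real3: "(x::real^3) \<bullet> y = x$1 * y$1 + x$2 * y$2 + x$3 * y$3"
  by (simp add: inner_vec_def sum_3)

lemma sphere_real3: "(x::real^3) \<in> sphere 0 1 \<longleftrightarrow> (x$1)^2 + (x$2)^2 + (x$3)^2 = 1"
proof -
  have "x \<in> sphere 0 1 \<longleftrightarrow> x \<bullet> x = 1" by (simp add: norm_eq_1)
  then show ?thesis by (simp add: inner_real3 power2_eq_square)
qed

lemma stereo_coord_injective:
  assumes x: "x \<in> sphere 0 1" and pole: "x$3 \<noteq> 1" and tangent: "v \<bullet> x = 0"
    and zero: "stereo_coord x v = 0"
  shows "v = 0"
proof -
  have s: "(x$1)^2 + (x$2)^2 + (x$3)^2 = 1" using x sphere_real3 by blast
  have t: "v$1 * x$1 + v$2 * x$2 + v$3 * x$3 = 0" using tangent by (simp add: inner_real3)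
  have p: "(1 - x$3) * v$1 + v$3 * x$1 = 0" and q: "(1 - x$3) * v$2 + v$3 * x$2 = 0"
    using zero by (simp_all add: stereo_coord_def complex_eq_iff)
  have "(1 - x$3) * v$3 = x$1 * ((1 - x$3) * v$1 + v$3 * x$1) + x$2 * ((1 - x$3) * v$2 + v$3 * x$2)
          - (1 - x$3) * (v$1 * x$1 + v$2 * x$2 + v$3 * x$3)"
    using s by algebra
  then have "v$3 = 0" using p q t pole by simp
  then have "v$1 = 0" "v$2 = 0" using p q pole by simp_all
  with \<open>v$3 = 0\<close> show "v = 0" by (simp add: vec_eq_iff forall_3)
qed

definition flip3 :: "real^3 \<Rightarrow> real^3" where
  "flip3 x = (\<chi> i. if i = 3 then - x$i else x$i)"

lemma flip3_components [simp]: "flip3 x $ 1 = x$1" "flip3 x $ 2 = x$2" "flip3 x $ 3 = - x$3"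
  by (simp_all add: flip3_def)

lemma flip3_flip3 [simp]: "flip3 (flip3 x) = x"
  by (simp add: vec_eq_iff forall_3)

lemma inner_flip3 [simp]: "flip3 x \<bullet> flip3 y = x \<bullet> y"
  by (simp add: inner_real3)

lemma flip3_eq_0_iff [simp]: "flip3 x = 0 \<longleftrightarrow> x = 0"
  by (metis flip3_flip3 inner_flip3 inner_eq_zero_iff)

lemma norm_flip3 [simp]: "norm (flip3 x) = norm x"
  by (simp add: norm_eq_sqrt_inner)

lemma linear_flip3: "linear flip3"
  by (auto simp: linear_iff vec_eq_iff forall_3)

lemma stereo_coord_equator:
  assumes x: "x \<in> sphere 0 1" and equator: "x$3 = 0" and tangent: "v \<bullet> x = 0"
  shows "stereo_coord x v = - ((Complex (x$1) (x$2))^2) * cnj (stereo_coord x (flip3 v))"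
proof -
  define a b where "a = x$1" and "b = x$2"
  have s: "a^2 + b^2 = 1" using x equator sphere_real3 unfolding a_def b_def by fastforce
  have t: "v$1 * a + v$2 * b = 0" using tangent equator by (simp add: inner_real3 a_def b_def)
  have "v$1 + v$3 * a = - (a*a - b*b) * (v$1 - v$3 * a) - 2*a*b*(v$2 - v$3*b)"
    using s t by algebra
  moreover have "v$2 + v$3 * b = (a*a - b*b) * (v$2 - v$3 * b) - 2*a*b*(v$1 - v$3*a)"
    using s t by algebra
  ultimately show ?thesis
    using equator by (simp add: stereo_coord_def complex_eq_iff power2_eq_square algebra_simps
        a_def b_def)
qed

definition lower_hemisphere :: "complex \<Rightarrow> real^3" where
  "lower_hemisphere z = (\<chi> i. if i = 1 then Re z else if i = 2 then Im z else - sqrt (1 - (cmod z)^2))"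

lemma lower_hemisphere_components [simp]:
  "lower_hemisphere z $ 1 = Re z" "lower_hemisphere z $ 2 = Im z"
  "lower_hemisphere z $ 3 = - sqrt (1 - (cmod z)^2)"
  by (simp_all add: lower_hemisphere_def)

lemma continuous_on_lower_hemisphere: "continuous_on S lower_hemisphere"
  unfolding lower_hemisphere_def
proof (intro continuous_on_vec_lambda)
  show "continuous_on S (\<lambda>z. if i = 1 then Re z else if i = 2 then Im z else - sqrt (1 - (cmod z)^2))"
    for i :: 3
    by (cases "i = 1"; cases "i = 2") (auto intro!: continuous_intros)
qed

lemma lower_hemisphere_in_sphere:
  assumes "z \<in> cball 0 1"
  shows "lower_hemisphere z \<in> sphere 0 1"
proof -
  have "(cmod z)^2 \<le> 1" using assms by (simp add: power_le_one)
  then show ?thesis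
    unfolding sphere_real3 by (simp add: cmod_power2)
qed

lemma lower_hemisphere_not_north_pole:
  assumes "z \<in> cball 0 1"
  shows "lower_hemisphere z $ 3 \<noteq> 1"
proof -
  have "(cmod z)^2 \<le> 1" using assms by (simp add: power_le_one)
  then have "0 \<le> sqrt (1 - (cmod z)^2)" by simp
  then show ?thesis by (simp only: lower_hemisphere_components)
qed

lemma lower_hemisphere_equator:
  assumes "z \<in> sphere 0 1"
  shows "lower_hemisphere z $ 3 = 0" "flip3 (lower_hemisphere z) = lower_hemisphere z"
    and "Complex (lower_hemisphere z $ 1) (lower_hemisphere z $ 2) = z"
  using assms by (simp_all add: vec_eq_iff forall_3 complex_eq_iff)

definition nonvanishing_tangent_field :: "(real^3 \<Rightarrow> real^3) \<Rightarrow> bool" where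
  "nonvanishing_tangent_field v \<longleftrightarrow>
     continuous_on (sphere 0 1) v \<and> (\<forall>x\<in>sphere 0 1. v x \<bullet> x = 0 \<and> v x \<noteq> 0)"

text \<open>Conjugating by the reflection preserves such fields; this moves the upper hemisphere
  onto the lower one.\<close>
lemma nonvanishing_tangent_field_flip3:
  assumes "nonvanishing_tangent_field v"
  shows "nonvanishing_tangent_field (flip3 \<circ> v \<circ> flip3)"
proof -
  have cont_flip3: "continuous_on S flip3" for S
    using linear_flip3 by (simp add: linear_continuous_on linear_conv_bounded_linear)
  have "flip3 ` sphere 0 1 \<subseteq> sphere 0 1" by auto
  then have "continuous_on (sphere 0 1) (v \<circ> flip3)"
    using assms unfolding nonvanishing_tangent_field_def
    by (intro continuous_on_compose cont_flip3) (auto intro: continuous_on_subset)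
  then have "continuous_on (sphere 0 1) (flip3 \<circ> v \<circ> flip3)"
    by (metis comp_assoc continuous_on_compose cont_flip3)
  moreover have "(flip3 \<circ> v \<circ> flip3) x \<bullet> x = 0 \<and> (flip3 \<circ> v \<circ> flip3) x \<noteq> 0"
    if "x \<in> sphere 0 1" for x
    using assms that inner_flip3[of "v (flip3 x)" "flip3 x"]
    unfolding nonvanishing_tangent_field_def by simp
  ultimately show ?thesis
    unfolding nonvanishing_tangent_field_def by blast
qed

text \<open>On the closed disc, i.e. over the lower hemisphere, a nonvanishing tangent field
  read in stereographic coordinates is a nonvanishing complex function on a convex set,
  hence has a continuous logarithm.\<close>
lemma lower_hemisphere_continuous_log:
  assumes v: "nonvanishing_tangent_field v"
  obtains G where "continuous_on (cball 0 1) G"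
    and "\<And>z. z \<in> cball 0 1 \<Longrightarrow>
           stereo_coord (lower_hemisphere z) (v (lower_hemisphere z)) = exp (G z)"
proof -
  have "continuous_on (cball 0 1) (v \<circ> lower_hemisphere)"
    using v lower_hemisphere_in_sphere unfolding nonvanishing_tangent_field_def
    by (intro continuous_on_compose continuous_on_lower_hemisphere)
       (auto intro: continuous_on_subset)
  then have cont: "continuous_on (cball 0 1)
               (\<lambda>z. stereo_coord (lower_hemisphere z) (v (lower_hemisphere z)))"
    unfolding stereo_coord_def comp_def
    by (intro continuous_intros continuous_on_lower_hemisphere) auto
  have nonzero: "stereo_coord (lower_hemisphere z) (v (lower_hemisphere z)) \<noteq> 0"
    if z: "z \<in> cball 0 1" for z
    using v stereo_coord_injective[OF lower_hemisphere_in_sphere[OF z]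
        lower_hemisphere_not_north_pole[OF z]] lower_hemisphere_in_sphere[OF z]
    unfolding nonvanishing_tangent_field_def by blast
  show thesis
    using continuous_logarithm_on_cball[OF cont nonzero] that by blast
qed

text \<open>Logarithms on the two hemispheres (the upper one
  handled by reflecting the field) are compared on the equator, where the transition function
  of the two stereographic trivialisations produces a continuous logarithm of z^2.\<close>
theorem hairy_ball_sphere:
  "\<not> nonvanishing_tangent_field v"
proof
  assume v: "nonvanishing_tangent_field v"
  obtain G where cont_G: "continuous_on (cball 0 1) G"
    and G: "\<And>z. z \<in> cball 0 1 \<Longrightarrow>
           stereo_coord (lower_hemisphere z) (v (lower_hemisphere z)) = exp (G z)"
    using lower_hemisphere_continuous_log[OF v] by blast
  obtain H where cont_H: "continuous_on (cball 0 1) H"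
    and H: "\<And>z. z \<in> cball 0 1 \<Longrightarrow> stereo_coord (lower_hemisphere z)
               ((flip3 \<circ> v \<circ> flip3) (lower_hemisphere z)) = exp (H z)"
    using lower_hemisphere_continuous_log[OF nonvanishing_tangent_field_flip3[OF v]] by blast
  define K where "K z = G z - cnj (H z) + \<i> * of_real pi" for z
  have "continuous_on (sphere 0 1) K"
    unfolding K_def using sphere_cball
    by (intro continuous_intros continuous_on_subset[OF cont_G] continuous_on_subset[OF cont_H])
  moreover have "z^2 = exp (K z)" if z: "z \<in> sphere 0 1" for z
  proof -
    let ?x = "lower_hemisphere z"
    have disc: "z \<in> cball 0 1" using z by simp
    have x: "?x \<in> sphere 0 1" using lower_hemisphere_in_sphere[OF disc] .
    have "v ?x \<bullet> ?x = 0" using v x unfolding nonvanishing_tangent_field_def by blast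
    then have "exp (G z) = - (z^2) * cnj (exp (H z))"
      using stereo_coord_equator[OF x] lower_hemisphere_equator[OF z] G[OF disc] H[OF disc]
      by simp
    then show ?thesis
      by (simp add: K_def exp_add exp_diff exp_cnj field_simps)
  qed
  ultimately show False
    by (rule circle_square_no_continuous_log)
qed

definition fiber_iso :: "real^3 \<Rightarrow> real^3 \<Rightarrow> real \<times> (real^3)" where
  "fiber_iso x w = (w \<bullet> x, w - (w \<bullet> x) *\<^sub>R x)"

lemma linear_fiber_iso: "linear (fiber_iso x)"
  unfolding linear_iff fiber_iso_def by (auto simp: inner_add_left algebra_simps)

lemma inj_fiber_iso: "inj (fiber_iso x)"
  unfolding inj_def fiber_iso_def by (auto simp: prod_eq_iff)

lemma range_fiber_iso:
  assumes "x \<in> S2"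
  shows "range (fiber_iso x) = sum_fiber x"
proof -
  have unit: "x \<bullet> x = 1" using assms by (simp add: S2_def norm_eq_1)
  have "fiber_iso x (t *\<^sub>R x + u) = (t, u)" if "u \<bullet> x = 0" for t u
    using unit that by (simp add: fiber_iso_def inner_add_left)
  then have "sum_fiber x \<subseteq> range (fiber_iso x)"
    unfolding sum_fiber_def by (auto intro!: range_eqI[OF sym])
  moreover have "range (fiber_iso x) \<subseteq> sum_fiber x"
    using unit by (auto simp: fiber_iso_def sum_fiber_def inner_diff_left)
  ultimately show ?thesis by blast
qed

text \<open>Hence the Whitney sum is trivial: transporting the standard basis gives a moving basis.\<close>
lemma exists_sum_moving_basis: "\<exists>e. sum_moving_basis e"
proof -
  have "card {1..3::nat} = card (Basis :: (real^3) set)" by simp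
  then obtain g where g: "bij_betw g {1..3::nat} (Basis :: (real^3) set)"
    by (metis bij_betw_iff_card finite_Basis finite_atLeastAtMost)
  define e where "e i x = fiber_iso x (g i)" for i x
  have image: "(\<lambda>i. e i x) ` {1..3} = fiber_iso x ` Basis" for x
    using g unfolding e_def bij_betw_def by (metis image_image)
  have "sum_moving_basis e"
    unfolding sum_moving_basis_def sum_section_def
  proof (intro conjI ballI)
    show "continuous_on S2 (e i)" for i
      unfolding e_def fiber_iso_def by (intro continuous_intros)
    show "e i x \<in> sum_fiber x" if "x \<in> S2" for i x
      using range_fiber_iso[OF that] unfolding e_def by blast
    show "inj_on (\<lambda>i. e i x) {1..3}" for x
      using g inj_fiber_iso unfolding e_def bij_betw_def
      by (metis comp_inj_on comp_apply inj_on_subset subset_UNIV inj_on_cong)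
    show "independent ((\<lambda>i. e i x) ` {1..3})" for x
      unfolding image
      by (intro linear_independent_injective_image linear_fiber_iso independent_Basis
          inj_on_subset[OF inj_fiber_iso]) simp
    show "span ((\<lambda>i. e i x) ` {1..3}) = sum_fiber x" if "x \<in> S2" for x
      unfolding image span_linear_image[OF linear_fiber_iso] span_Basis
      using range_fiber_iso[OF that] .
  qed
  then show ?thesis by blast
qed

lemma moving_basis_nonzero:
  assumes "sum_moving_basis e" and "i \<in> {1..3}" and "x \<in> S2"
  shows "e i x \<noteq> 0"
proof
  assume "e i x = 0"
  then have "0 \<in> (\<lambda>i. e i x) ` {1..3}" using assms(2) by force
  then have "dependent ((\<lambda>i. e i x) ` {1..3})" by (rule dependent_zero)
  then show False using assms(1,3) unfolding sum_moving_basis_def by blast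
qed

lemma no_nonvanishing_tangent_section:
  assumes s: "sum_section s" and tangent: "\<And>x. x \<in> S2 \<Longrightarrow> fst (s x) = 0 \<and> s x \<noteq> 0"
  shows False
proof -
  have "nonvanishing_tangent_field (snd \<circ> s)"
    unfolding nonvanishing_tangent_field_def
  proof (intro conjI ballI)
    show "continuous_on (sphere 0 1) (snd \<circ> s)"
      using s unfolding sum_section_def S2_def by (intro continuous_intros) auto
    fix x :: "real^3" assume "x \<in> sphere 0 1"
    then have x: "x \<in> S2" by (simp add: S2_def)
    show "(snd \<circ> s) x \<bullet> x = 0"
      using s x unfolding sum_section_def sum_fiber_def by (auto simp: case_prod_beta)
    show "(snd \<circ> s) x \<noteq> 0"
      using tangent[OF x] by (simp add: prod_eq_iff)
  qed
  then show False by (simp add: hairy_ball_sphere)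
qed

lemma f_line_parseval: "parseval_frame (UNIV :: real set) (\<lambda>i. f_line i x) 3"
proof -
  have "{1..3::nat} = {1, 2, 3}" by auto
  then show ?thesis by (simp add: parseval_frame_def f_line_def)
qed

text \<open>The main theorem: the second member of a moving basis lifting (f_1, f_2, f_3) would be a
  nonvanishing section of TS^2.\<close>
theorem mainTheorem5:
  shows "(\<forall>x\<in>S2. parseval_frame (UNIV :: real set) (\<lambda>i. f_line i x) 3) \<and>
         (\<exists>e. sum_moving_basis e) \<and>
         \<not> (\<exists>e. sum_moving_basis e \<and>
               (\<forall>i\<in>{1..3}. \<forall>x\<in>S2. P_line (e i x) = (f_line i x, 0)))"
proof (intro conjI ballI f_line_parseval exists_sum_moving_basis notI)
  assume "\<exists>e. sum_moving_basis e \<and> (\<forall>i\<in>{1..3}. \<forall>x\<in>S2. P_line (e i x) = (f_line i x, 0))"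
  then obtain e where basis: "sum_moving_basis e"
    and lift: "\<forall>i\<in>{1..3}. \<forall>x\<in>S2. P_line (e i x) = (f_line i x, 0)" by blast
  have two: "(2::nat) \<in> {1..3}" by simp
  show False
  proof (rule no_nonvanishing_tangent_section)
    show "sum_section (e 2)" using basis two unfolding sum_moving_basis_def by blast
    show "fst (e 2 x) = 0 \<and> e 2 x \<noteq> 0" if "x \<in> S2" for x
      using lift two that moving_basis_nonzero[OF basis two that]
      by (auto simp: P_line_def f_line_def)
  qed
qed

end
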